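(* Let $(X,d)$ be a complete metric space and let $\{f_{\eta_k}:\eta_k\in B^{[k]},\,k\in\mathbb{N}\}$ be a binary tree of continuous maps $f_{\eta_k}:X\to X$. Fix an infinite code $\eta\in B^{[\infty]}$ and consider the sequence of maps $\{f_{\tau_k\eta}\}_{k\in\mathbb{N}}$ along the path $P_\eta$. Assume there is a nonempty compact set $C_{P_\eta}\subseteq X$ with $f_{\tau_k\eta}(C_{P_\eta})\subseteq C_{P_\eta}$ for all $k\in\mathbb{N}$, and that each $f_{\tau_k\eta}$ is Lipschitz with Lipschitz constant $s_{\tau_k\eta}$. If $$\sum_{k=1}^\infty\prod_{i=1}^k s_{\tau_i\eta}<\infty,$$ then for every $x\in C_{P_\eta}$ the limit $$\gamma(\eta):=\lim_{k\to\infty} f_{\tau_1\eta}\circ f_{\tau_2\eta}\circ\cdots\circ f_{\tau_k\eta}(x)$$ exists, and it is the same element of $C_{P_\eta}$ for all $x\in C_{P_\eta}$.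
   Context: $B^{[k]}=\{1,2\}^k$ is the set of binary codes $\eta_k=(i_1i_2\ldots i_k)$ of length $k$, and $B^{[\infty]}=\{1,2\}^{\mathbb{N}}$ the set of infinite codes $\eta=(i_1i_2\ldots)$. For $\eta\in B^{[\infty]}$ (or a finite code of length $>\ell$), the truncation $\tau_\ell\eta=(i_1\ldots i_\ell)\in B^{[\ell]}$. A binary tree of maps assigns to each finite code $\eta_k$ (all $k\ge 1$) a continuous map $f_{\eta_k}:X\to X$. The path $P_\eta$ determined by $\eta$ is the sequence of codes $(\tau_1\eta,\tau_2\eta,\ldots)$. For $f:X\to X$, $\mathrm{Lip}(f)=\sup_{x\neq y}d(f(x),f(y))/d(x,y)$. *)

theory Defs
  imports "HOL-Analysis.Analysis"
begin

(* Binary codes: finite code (i_1 ... i_k) is a list of naturals with entries in {1,2};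
   an infinite code is a function nat => nat, with eta i = i_i for i >= 1 (eta 0 unused). *)
definition binary_codes :: "nat \<Rightarrow> nat list set" where
  "binary_codes k = {xs. length xs = k \<and> set xs \<subseteq> {1,2}}"

definition infinite_codes :: "(nat \<Rightarrow> nat) set" where
  "infinite_codes = {eta. \<forall>i\<ge>1. eta i \<in> {1,2}}"

definition trunc :: "nat \<Rightarrow> (nat \<Rightarrow> nat) \<Rightarrow> nat list" where
  "trunc l eta = map eta [1..<Suc l]"

fun path_comp :: "(nat list \<Rightarrow> 'a \<Rightarrow> 'a) \<Rightarrow> (nat \<Rightarrow> nat) \<Rightarrow> nat \<Rightarrow> 'a \<Rightarrow> 'a" where
  "path_comp f eta 0 = id"
| "path_comp f eta (Suc k) = path_comp f eta k \<circ> f (trunc (Suc k) eta)"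

end

theory Submission
  imports Defs
begin

(* The composition P k = f_{tau_1 eta} o ... o f_{tau_k eta} is Lipschitz with constant
   L k = s_{tau_1 eta} * ... * s_{tau_k eta}, and the images P k ` C are nested, because
   P (Suc k) ` C = P k ` (f_{tau_(k+1) eta} ` C).  Hence for m, n >= k both P m x and P n y
   lie in P k ` C, whose diameter is at most L k * diameter C.  Summability forces L k -> 0,
   so every orbit is Cauchy and any two orbits are asymptotic: they share one limit, which
   lies in the closed set C. *)

lemma dist_lipschitz_image_le:
  fixes g :: "'a::metric_space \<Rightarrow> 'b::metric_space"
  assumes "L-lipschitz_on C g" "bounded C" "x \<in> C" "y \<in> C"
  shows "dist (g x) (g y) \<le> L * diameter C"
proof -
  have "dist (g x) (g y) \<le> L * dist x y"
    using assms by (intro lipschitz_onD)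
  also have "\<dots> \<le> L * diameter C"
    using assms lipschitz_on_nonneg diameter_bounded_bound by (intro mult_left_mono) auto
  finally show ?thesis .
qed

lemma dist_nested_lipschitz_images_le:
  fixes P :: "nat \<Rightarrow> 'a::metric_space \<Rightarrow> 'b::metric_space"
  assumes nested: "\<And>k. P (Suc k) ` C \<subseteq> P k ` C"
    and lip: "\<And>k. (L k)-lipschitz_on C (P k)"
    and "bounded C" "x \<in> C" "y \<in> C" "k \<le> m" "k \<le> n"
  shows "dist (P m x) (P n y) \<le> L k * diameter C"
proof -
  have "P j ` C \<subseteq> P k ` C" if "k \<le> j" for j
    using lift_Suc_antimono_le[of "\<lambda>j. P j ` C", OF nested that] .
  then obtain x' y' where "x' \<in> C" "y' \<in> C" "P m x = P k x'" "P n y = P k y'"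
    using assms by (metis image_iff image_subset_iff)
  then show ?thesis
    using dist_lipschitz_image_le[OF lip \<open>bounded C\<close>] by simp
qed

lemma nested_lipschitz_images_common_limit:
  fixes P :: "nat \<Rightarrow> 'a::complete_space \<Rightarrow> 'a"
  assumes nested: "\<And>k. P (Suc k) ` C \<subseteq> P k ` C"
    and into: "\<And>k. P k ` C \<subseteq> C"
    and lip: "\<And>k. (L k)-lipschitz_on C (P k)"
    and L: "L \<longlonglongrightarrow> 0"
    and C: "C \<noteq> {}" "bounded C" "closed C"
  shows "\<exists>\<gamma>\<in>C. \<forall>x\<in>C. (\<lambda>k. P k x) \<longlonglongrightarrow> \<gamma>"
proof -
  note dist_le = dist_nested_lipschitz_images_le[of P C L, OF nested lip \<open>bounded C\<close>]
  have LD: "(\<lambda>k. L k * diameter C) \<longlonglongrightarrow> 0"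
    using tendsto_mult_left_zero[OF L] .
  have "Cauchy (\<lambda>k. P k x)" if "x \<in> C" for x
  proof (rule metric_CauchyI)
    fix e :: real assume "e > 0"
    then obtain M where "L M * diameter C < e"
      using LD by (metis LIMSEQ_D diff_zero dual_order.refl abs_less_iff real_norm_def)
    then show "\<exists>M. \<forall>m\<ge>M. \<forall>n\<ge>M. dist (P m x) (P n x) < e"
      using dist_le[OF that that] by (meson order.strict_trans1)
  qed
  then have lim: "(\<lambda>k. P k x) \<longlonglongrightarrow> lim (\<lambda>k. P k x)" if "x \<in> C" for x
    using that Cauchy_convergent convergent_LIMSEQ_iff by blast
  obtain x0 where x0: "x0 \<in> C"
    using C by blast
  have "(\<lambda>k. P k x) \<longlonglongrightarrow> lim (\<lambda>k. P k x0)" if x: "x \<in> C" for x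
  proof -
    have "(\<lambda>k. dist (P k x) (P k x0)) \<longlonglongrightarrow> 0"
      using dist_le[OF x x0] by (intro tendsto_sandwich[OF _ _ tendsto_const LD]) auto
    moreover have "(\<lambda>k. dist (P k x) (P k x0)) \<longlonglongrightarrow> dist (lim (\<lambda>k. P k x)) (lim (\<lambda>k. P k x0))"
      using lim x x0 by (intro tendsto_dist)
    ultimately show ?thesis
      using lim[OF x] LIMSEQ_unique by fastforce
  qed
  moreover have "lim (\<lambda>k. P k x0) \<in> C"
    using into x0 by (intro closed_sequentially[OF \<open>closed C\<close> _ lim[OF x0]]) auto
  ultimately show ?thesis
    by blast
qed

lemma path_comp_image_subset:
  assumes "\<And>k. k \<ge> 1 \<Longrightarrow> f (trunc k eta) ` C \<subseteq> C"
  shows "path_comp f eta k ` C \<subseteq> C"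
  using assms by (induction k) (auto simp: image_subset_iff)

lemma path_comp_Suc_image_subset:
  assumes "f (trunc (Suc k) eta) ` C \<subseteq> C"
  shows "path_comp f eta (Suc k) ` C \<subseteq> path_comp f eta k ` C"
  using assms by (auto simp: image_comp[symmetric] intro: image_mono)

lemma lipschitz_on_path_comp:
  assumes lip: "\<And>k. k \<ge> 1 \<Longrightarrow> (s (trunc k eta))-lipschitz_on C (f (trunc k eta))"
    and into: "\<And>k. k \<ge> 1 \<Longrightarrow> f (trunc k eta) ` C \<subseteq> C"
  shows "(\<Prod>i=1..k. s (trunc i eta))-lipschitz_on C (path_comp f eta k)"
proof (induction k)
  case 0
  then show ?case
    by (simp add: lipschitz_on_def)
next
  case (Suc k)
  have "((\<Prod>i=1..k. s (trunc i eta)) * s (trunc (Suc k) eta))-lipschitz_on C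
          (path_comp f eta k \<circ> f (trunc (Suc k) eta))"
    using into[of "Suc k"] by (intro lipschitz_on_compose lip lipschitz_on_subset[OF Suc.IH]) auto
  then show ?case
    by (simp add: prod.nat_ivl_Suc')
qed

theorem mainTheorem1:
  fixes f :: "nat list \<Rightarrow> 'a::complete_space \<Rightarrow> 'a"
    and eta :: "nat \<Rightarrow> nat"
    and C :: "'a set"
    and s :: "nat list \<Rightarrow> real"
  assumes tree_cont: "\<And>k xs. k \<ge> 1 \<Longrightarrow> xs \<in> binary_codes k \<Longrightarrow> continuous_on UNIV (f xs)"
    and eta_code: "eta \<in> infinite_codes"
    and C_ne: "C \<noteq> {}" and C_compact: "compact C"
    and C_inv: "\<And>k. k \<ge> 1 \<Longrightarrow> f (trunc k eta) ` C \<subseteq> C"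
    and lip: "\<And>k. k \<ge> 1 \<Longrightarrow> lipschitz_on (s (trunc k eta)) UNIV (f (trunc k eta))"
    and summ: "summable (\<lambda>k. \<Prod>i=1..Suc k. s (trunc i eta))"
  shows "\<exists>\<gamma>\<in>C. \<forall>x\<in>C. (\<lambda>k. path_comp f eta k x) \<longlonglongrightarrow> \<gamma>"
proof (rule nested_lipschitz_images_common_limit)
  show "path_comp f eta (Suc k) ` C \<subseteq> path_comp f eta k ` C" for k
    using C_inv by (intro path_comp_Suc_image_subset) simp
  show "path_comp f eta k ` C \<subseteq> C" for k
    using C_inv by (rule path_comp_image_subset)
  show "(\<Prod>i=1..k. s (trunc i eta))-lipschitz_on C (path_comp f eta k)" for k
    using lip C_inv by (intro lipschitz_on_path_comp lipschitz_on_subset[OF lip]) auto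
  have "summable (\<lambda>k. \<Prod>i=1..k. s (trunc i eta))"
    using summ by (subst summable_Suc_iff[symmetric])
  then show "(\<lambda>k. \<Prod>i=1..k. s (trunc i eta)) \<longlonglongrightarrow> 0"
    by (rule summable_LIMSEQ_zero)
  show "C \<noteq> {}" "bounded C" "closed C"
    using C_ne C_compact by (auto intro: compact_imp_bounded compact_imp_closed)
qed

end
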